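(* Let $(U(n))_{n\geqslant 0}$ be an arithmetic progression of positive integers, $U(n)=U(0)+nd$ with $d$ an integer, and let $l$ be a positive integer. (i) Let $S(n)$ be the right-concatenation $\overline{U(0)U(1)\cdots U(n)}$. Then for every $n\geqslant 0$ such that $U(n+1)$, $U(n+2)$, $U(n+3)$ all have exactly $l$ decimal digits, $$S(n+3) - (10^l+2)\, S(n+2) + (2\cdot 10^l + 1)\, S(n+1) - 10^l\, S(n) = 0.$$ (ii) Let $S(n)$ be the left-concatenation $\overline{U(n)U(n-1)\cdots U(0)}$. Then for every $n\geqslant 0$ such that $U(n+1)$, $U(n+2)$, $U(n+3)$ all have exactly $l$ decimal digits, $$S(n+3) - (2\cdot 10^l + 1)\, S(n+2) + (10^{2l}+2\cdot 10^l)\, S(n+1) - 10^{2l}\, S(n) = 0.$$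
   Context: For positive integers $a_0,\ldots,a_k$, $\overline{a_0a_1\cdots a_k}$ denotes the integer whose decimal expansion is the decimal expansion of $a_0$ followed by that of $a_1$, ..., followed by that of $a_k$. Thus for the right-concatenation $S(n+1)=S(n)\cdot 10^{k}+U(n+1)$ with $k$ the number of digits of $U(n+1)$, and for the left-concatenation $S(n+1)=U(n+1)\cdot 10^{p}+S(n)$ with $p$ the number of digits of $S(n)$. *)

theory Defs
  imports Main
begin

text \<open>Number of decimal digits of a natural number (with the convention 0 has 1 digit;
  only applied to positive integers below).\<close>
fun ndigits_nat :: "nat \<Rightarrow> nat" where
  "ndigits_nat m = (if m < 10 then 1 else Suc (ndigits_nat (m div 10)))"

definition ndigits :: "int \<Rightarrow> nat" where
  "ndigits x = ndigits_nat (nat x)"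

fun rconcat :: "(nat \<Rightarrow> int) \<Rightarrow> nat \<Rightarrow> int" where
  "rconcat U 0 = U 0"
| "rconcat U (Suc n) = rconcat U n * 10 ^ ndigits (U (Suc n)) + U (Suc n)"

fun lconcat :: "(nat \<Rightarrow> int) \<Rightarrow> nat \<Rightarrow> int" where
  "lconcat U 0 = U 0"
| "lconcat U (Suc n) = U (Suc n) * 10 ^ ndigits (lconcat U n) + lconcat U n"

end

theory Submission
  imports Defs
begin

text \<open>Both recurrences say that the second difference of U vanishes.
  If U(n+1), U(n+2), U(n+3) have l digits, right-concatenation gives
  S(k+1) = 10^l S(k) + U(k+1) for k = n, n+1, n+2, and eliminating S(n+1), S(n+2)
  leaves U(n+3) - 2 U(n+2) + U(n+1).  Left-concatenation gives
  S(k+1) = U(k+1) 10^(p + (k-n) l) + S(k) with p the number of digits of S(n), since prefixing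
  a positive number adds its digit count; the same elimination leaves
  10^(2l+p) (U(n+3) - 2 U(n+2) + U(n+1)).\<close>

declare ndigits_nat.simps [simp del]

lemma ndigits_nat_mult_power_add:
  assumes "0 < a" "b < 10 ^ p"
  shows "ndigits_nat (a * 10 ^ p + b) = ndigits_nat a + p"
  using assms(2)
proof (induction p arbitrary: b)
  case 0
  then show ?case by simp
next
  case (Suc p)
  have "10 \<le> 10 * (a * 10 ^ p)"
    using \<open>0 < a\<close> by simp
  then have "10 \<le> a * 10 ^ Suc p + b"
    by (metis power_Suc mult.left_commute trans_le_add1)
  moreover have "(a * 10 ^ Suc p + b) div 10 = a * 10 ^ p + b div 10"
    by simp
  moreover have "b div 10 < 10 ^ p"
    using Suc.prems by (simp add: div_less_iff_less_mult mult.commute)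
  ultimately show ?case
    using Suc.IH by (subst ndigits_nat.simps) simp
qed

lemma less_power_ndigits_nat: "m < 10 ^ ndigits_nat m"
proof (induction m rule: ndigits_nat.induct)
  case (1 m)
  show ?case
  proof (cases "m < 10")
    case True
    then show ?thesis by (subst ndigits_nat.simps) simp
  next
    case False
    then have "m div 10 < 10 ^ ndigits_nat (m div 10)"
      using "1.IH" by simp
    then have "m < 10 * 10 ^ ndigits_nat (m div 10)"
      by linarith
    then show ?thesis
      using False by (subst ndigits_nat.simps) simp
  qed
qed

lemma ndigits_mult_power_add:
  assumes "0 < a" "0 \<le> b" "b < 10 ^ p"
  shows "ndigits (a * 10 ^ p + b) = ndigits a + p"
proof -
  have "nat (a * 10 ^ p + b) = nat a * 10 ^ p + nat b"
    using assms by (simp add: nat_add_distrib nat_mult_distrib nat_power_eq)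
  moreover have "nat b < 10 ^ p"
    using assms by (simp add: nat_less_iff)
  ultimately show ?thesis
    using assms(1) by (simp add: ndigits_def ndigits_nat_mult_power_add)
qed

lemma less_power_ndigits:
  assumes "0 \<le> b"
  shows "b < 10 ^ ndigits b"
  using less_power_ndigits_nat[of "nat b"] assms
  by (simp add: ndigits_def nat_less_iff)

lemma second_difference_arith_prog:
  fixes U :: "nat \<Rightarrow> 'a::comm_ring_1"
  assumes "\<forall>n. U n = U 0 + of_nat n * d"
  shows "U (n + 2) - 2 * U (n + 1) + U n = 0"
  using assms[rule_format, of "n + 2"] assms[rule_format, of "n + 1"] assms[rule_format, of n]
  by (simp add: algebra_simps)

lemma rconcat_recurrence:
  assumes "U (n + 3) - 2 * U (n + 2) + U (n + 1) = 0"
    and "ndigits (U (n + 1)) = l" "ndigits (U (n + 2)) = l" "ndigits (U (n + 3)) = l"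
  shows "rconcat U (n + 3) - (10 ^ l + 2) * rconcat U (n + 2)
      + (2 * 10 ^ l + 1) * rconcat U (n + 1) - 10 ^ l * rconcat U n = 0"
proof -
  have S1: "rconcat U (n + 1) = 10 ^ l * rconcat U n + U (n + 1)"
    and S2: "rconcat U (n + 2) = 10 ^ l * rconcat U (n + 1) + U (n + 2)"
    and S3: "rconcat U (n + 3) = 10 ^ l * rconcat U (n + 2) + U (n + 3)"
    using assms(2-4) by (simp_all add: numeral_2_eq_2 numeral_3_eq_3)
  show ?thesis
    unfolding S3 S2 S1 using assms(1) by (simp add: algebra_simps)
qed

lemma lconcat_pos: "\<forall>n. 0 < U n \<Longrightarrow> 0 < lconcat U n"
  by (induction n) (auto simp: add_pos_pos)

lemma ndigits_lconcat_Suc: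
  assumes "\<forall>n. 0 < U n"
  shows "ndigits (lconcat U (Suc n)) = ndigits (U (Suc n)) + ndigits (lconcat U n)"
  using assms lconcat_pos[OF assms, of n] less_power_ndigits[of "lconcat U n"]
  by (simp add: ndigits_mult_power_add)

lemma lconcat_recurrence:
  assumes pos: "\<forall>n. 0 < U n"
    and "U (n + 3) - 2 * U (n + 2) + U (n + 1) = 0"
    and "ndigits (U (n + 1)) = l" "ndigits (U (n + 2)) = l" "ndigits (U (n + 3)) = l"
  shows "lconcat U (n + 3) - (2 * 10 ^ l + 1) * lconcat U (n + 2)
      + (10 ^ (2 * l) + 2 * 10 ^ l) * lconcat U (n + 1) - 10 ^ (2 * l) * lconcat U n = 0"
proof -
  define X :: int where "X = 10 ^ l"
  define Y :: int where "Y = 10 ^ ndigits (lconcat U n)"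
  have digits1: "ndigits (lconcat U (n + 1)) = l + ndigits (lconcat U n)"
    using assms(3) ndigits_lconcat_Suc[OF pos, of n] by (simp del: lconcat.simps)
  have digits2: "ndigits (lconcat U (n + 2)) = l + (l + ndigits (lconcat U n))"
    using assms(4) digits1 ndigits_lconcat_Suc[OF pos, of "n + 1"]
    by (simp del: lconcat.simps add: numeral_2_eq_2)
  have S1: "lconcat U (n + 1) = U (n + 1) * Y + lconcat U n"
    and S2: "lconcat U (n + 2) = U (n + 2) * (X * Y) + lconcat U (n + 1)"
    and S3: "lconcat U (n + 3) = U (n + 3) * (X * X * Y) + lconcat U (n + 2)"
    using digits1 digits2 by (simp_all add: X_def Y_def power_add numeral_2_eq_2 numeral_3_eq_3)
  have X2: "10 ^ (2 * l) = X * X"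
    by (simp add: X_def mult_2 power_add)
  have "lconcat U (n + 3) - (2 * X + 1) * lconcat U (n + 2)
      + (X * X + 2 * X) * lconcat U (n + 1) - X * X * lconcat U n
      = X * X * Y * (U (n + 3) - 2 * U (n + 2) + U (n + 1))"
    unfolding S3 S2 S1 by (simp add: algebra_simps)
  also have "\<dots> = 0"
    using assms(2) by simp
  finally show ?thesis
    unfolding X2 X_def .
qed

theorem lemma2:
  fixes U :: "nat \<Rightarrow> int" and d :: int and l :: nat
  assumes pos: "\<forall>n. U n > 0"
    and ap: "\<forall>n. U n = U 0 + int n * d"
    and l: "l > 0"
  shows "(\<forall>n. ndigits (U (n+1)) = l \<and> ndigits (U (n+2)) = l \<and> ndigits (U (n+3)) = l \<longrightarrow>
            rconcat U (n+3) - (10^l + 2) * rconcat U (n+2) + (2 * 10^l + 1) * rconcat U (n+1)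
              - 10^l * rconcat U n = 0)
       \<and> (\<forall>n. ndigits (U (n+1)) = l \<and> ndigits (U (n+2)) = l \<and> ndigits (U (n+3)) = l \<longrightarrow>
            lconcat U (n+3) - (2 * 10^l + 1) * lconcat U (n+2) + (10^(2*l) + 2 * 10^l) * lconcat U (n+1)
              - 10^(2*l) * lconcat U n = 0)"
proof -
  have "U (n + 3) - 2 * U (n + 2) + U (n + 1) = 0" for n
    using second_difference_arith_prog[OF ap, of "n + 1"] by (simp add: numeral_3_eq_3)
  then show ?thesis
    using rconcat_recurrence lconcat_recurrence[OF pos] by blast
qed

end
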